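(* Let $X$ be a metrizable space which is locally compact and $\sigma$-compact, let $G$ be a group and $\varphi\colon G\times X\to X$ an action (continuity is not required). The following are equivalent: (1) $\varphi$ is metric-independent expansive (MIE); (2) $\varphi$ is expansively extendible at a point; (3) $\varphi$ is cocompactly expansive.
   Context: Write $g\cdot x=\varphi(g,x)$. For a metric $d$ on $X$, the action is expansive with respect to $d$ if there is $c>0$ such that for all $x\neq y$ there is $g\in G$ with $d(g\cdot x,g\cdot y)>c$; it is MIE if it is expansive with respect to every metric compatible with the topology. For a family $\mathcal U$ of subsets and a set $A$, $A\prec\mathcal U$ means $A\subseteq U$ for some $U\in\mathcal U$. An action of $G$ on a space $Z$ is expansive by coverings if there is a finite open cover $\mathcal U$ of $Z$ such that $\{g\cdot x,g\cdot y\}\prec\mathcal U$ for all $g\in G$ implies $x=y$. The action $\varphi$ is expansively extendible at a point if, with $X'=X\cup\{p\}$ the one-point (Alexandroff) compactification of $X$, the action $\varphi'$ of $G$ on $X'$ defined by $\varphi'|_{G\times X}=\varphi$ and $g\cdot p=p$ for all $g\in G$ is expansive by coverings. The action is cocompactly expansive if there exist a finite open cover $\mathcal U$ of $X$ and a compact $K\subseteq X$ such that (i) $G\cdot K=X$ and (ii) whenever $\{g\cdot x,g\cdot y\}\prec\mathcal U\cup\{X\setminus K\}$ for every $g\in G$, then $x=y$. *)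

theory Defs
  imports "HOL-Analysis.Analysis" "HOL-Algebra.Group"
begin

definition group_act :: "('g, 'b) monoid_scheme \<Rightarrow> 'a topology \<Rightarrow> ('g \<Rightarrow> 'a \<Rightarrow> 'a) \<Rightarrow> bool" where
  "group_act G X \<phi> \<longleftrightarrow> group G \<and>
     (\<forall>g\<in>carrier G. \<forall>x\<in>topspace X. \<phi> g x \<in> topspace X) \<and>
     (\<forall>x\<in>topspace X. \<phi> \<one>\<^bsub>G\<^esub> x = x) \<and>
     (\<forall>g\<in>carrier G. \<forall>h\<in>carrier G. \<forall>x\<in>topspace X. \<phi> (g \<otimes>\<^bsub>G\<^esub> h) x = \<phi> g (\<phi> h x))"

definition sigma_compact_space :: "'a topology \<Rightarrow> bool" where
  "sigma_compact_space X \<longleftrightarrow> (\<exists>K :: nat \<Rightarrow> 'a set. (\<forall>n. compactin X (K n)) \<and> (\<Union>n. K n) = topspace X)"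

definition compatible_metric :: "'a topology \<Rightarrow> ('a \<Rightarrow> 'a \<Rightarrow> real) \<Rightarrow> bool" where
  "compatible_metric X d \<longleftrightarrow> Metric_space (topspace X) d \<and> Metric_space.mtopology (topspace X) d = X"

definition expansive_wrt :: "('g, 'b) monoid_scheme \<Rightarrow> 'a topology \<Rightarrow> ('g \<Rightarrow> 'a \<Rightarrow> 'a) \<Rightarrow> ('a \<Rightarrow> 'a \<Rightarrow> real) \<Rightarrow> bool" where
  "expansive_wrt G X \<phi> d \<longleftrightarrow> (\<exists>c>0. \<forall>x\<in>topspace X. \<forall>y\<in>topspace X. x \<noteq> y \<longrightarrow>
      (\<exists>g\<in>carrier G. d (\<phi> g x) (\<phi> g y) > c))"

definition MIE :: "('g, 'b) monoid_scheme \<Rightarrow> 'a topology \<Rightarrow> ('g \<Rightarrow> 'a \<Rightarrow> 'a) \<Rightarrow> bool" where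
  "MIE G X \<phi> \<longleftrightarrow> (\<forall>d. compatible_metric X d \<longrightarrow> expansive_wrt G X \<phi> d)"

definition refines :: "'a set \<Rightarrow> 'a set set \<Rightarrow> bool" where
  "refines A \<U> \<longleftrightarrow> (\<exists>U\<in>\<U>. A \<subseteq> U)"

definition finite_open_cover :: "'a topology \<Rightarrow> 'a set set \<Rightarrow> bool" where
  "finite_open_cover Z \<U> \<longleftrightarrow> finite \<U> \<and> (\<forall>U\<in>\<U>. openin Z U) \<and> \<Union>\<U> = topspace Z"

definition expansive_by_coverings :: "('g, 'b) monoid_scheme \<Rightarrow> 'a topology \<Rightarrow> ('g \<Rightarrow> 'a \<Rightarrow> 'a) \<Rightarrow> bool" where
  "expansive_by_coverings G Z \<psi> \<longleftrightarrow> (\<exists>\<U>. finite_open_cover Z \<U> \<and>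
     (\<forall>x\<in>topspace Z. \<forall>y\<in>topspace Z.
        (\<forall>g\<in>carrier G. refines {\<psi> g x, \<psi> g y} \<U>) \<longrightarrow> x = y))"

text \<open>One-point (Alexandroff) compactification: the added point p is None, X embeds via Some.\<close>
definition alexandroff :: "'a topology \<Rightarrow> 'a option topology" where
  "alexandroff X = topology (\<lambda>U.
     (None \<notin> U \<and> U \<subseteq> Some ` topspace X \<and> openin X (Some -` U)) \<or>
     (None \<in> U \<and> U \<subseteq> insert None (Some ` topspace X) \<and>
        compactin X (topspace X - Some -` U) \<and> closedin X (topspace X - Some -` U)))"

definition ext_action :: "('g \<Rightarrow> 'a \<Rightarrow> 'a) \<Rightarrow> 'g \<Rightarrow> 'a option \<Rightarrow> 'a option" where
  "ext_action \<phi> g z = (case z of None \<Rightarrow> None | Some x \<Rightarrow> Some (\<phi> g x))"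

definition expansively_extendible :: "('g, 'b) monoid_scheme \<Rightarrow> 'a topology \<Rightarrow> ('g \<Rightarrow> 'a \<Rightarrow> 'a) \<Rightarrow> bool" where
  "expansively_extendible G X \<phi> \<longleftrightarrow> expansive_by_coverings G (alexandroff X) (ext_action \<phi>)"

definition cocompactly_expansive :: "('g, 'b) monoid_scheme \<Rightarrow> 'a topology \<Rightarrow> ('g \<Rightarrow> 'a \<Rightarrow> 'a) \<Rightarrow> bool" where
  "cocompactly_expansive G X \<phi> \<longleftrightarrow> (\<exists>\<U> K. finite_open_cover X \<U> \<and> compactin X K \<and>
     (\<Union>g\<in>carrier G. \<phi> g ` K) = topspace X \<and>
     (\<forall>x\<in>topspace X. \<forall>y\<in>topspace X.
        (\<forall>g\<in>carrier G. refines {\<phi> g x, \<phi> g y} (\<U> \<union> {topspace X - K})) \<longrightarrow> x = y))"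

end

theory Submission
  imports Defs
begin

(* Expansive extendibility and cocompact expansivity are two descriptions of the same data: a
   finite open cover of the one-point compactification X' restricts to a finite open cover of X,
   a member containing the added point is the complement of a compact set K, and separating the
   added point from every other point amounts to every orbit meeting K.
   A Lebesgue number of such a cover on K is an expansivity constant for every compatible metric.
   Conversely, take a compatible metric d0 and a positive 1-Lipschitz function h that vanishes at
   infinity (it exists by local compactness and sigma-compactness). Then min (d0 x y) (h x + h y)
   is again a compatible metric, in which points near infinity are close to each other. If c is
   an expansivity constant for it, at most one point has its whole orbit inside {h < c/2}; hence
   for a suitable r every orbit meets the compact set K = {h >= r}, and {h < r} together with
   finitely many balls of radius c/2 covering K is the required cover. *)

section \<open>Expansive covers\<close>

definition expansive_cover ::
    "('g, 'b) monoid_scheme \<Rightarrow> 'a set \<Rightarrow> ('g \<Rightarrow> 'a \<Rightarrow> 'a) \<Rightarrow> 'a set set \<Rightarrow> bool" where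
  "expansive_cover G S \<phi> \<W> \<longleftrightarrow>
     (\<forall>x\<in>S. \<forall>y\<in>S. (\<forall>g\<in>carrier G. refines {\<phi> g x, \<phi> g y} \<W>) \<longrightarrow> x = y)"

lemma expansive_by_coverings_iff:
  "expansive_by_coverings G Z \<psi> \<longleftrightarrow>
     (\<exists>\<U>. finite_open_cover Z \<U> \<and> expansive_cover G (topspace Z) \<psi> \<U>)"
  by (simp add: expansive_by_coverings_def expansive_cover_def)

lemma cocompactly_expansive_iff:
  "cocompactly_expansive G X \<phi> \<longleftrightarrow>
     (\<exists>\<U> K. finite_open_cover X \<U> \<and> compactin X K \<and> (\<Union>g\<in>carrier G. \<phi> g ` K) = topspace X \<and>
        expansive_cover G (topspace X) \<phi> (\<U> \<union> {topspace X - K}))"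
  by (simp add: cocompactly_expansive_def expansive_cover_def)

lemma group_act_closed:
  "group_act G X \<phi> \<Longrightarrow> g \<in> carrier G \<Longrightarrow> x \<in> topspace X \<Longrightarrow> \<phi> g x \<in> topspace X"
  by (simp add: group_act_def)

lemma group_act_inv_cancel:
  assumes "group_act G X \<phi>" "g \<in> carrier G" "x \<in> topspace X"
  shows "\<phi> (inv\<^bsub>G\<^esub> g) (\<phi> g x) = x"
proof -
  have "group G" using assms(1) by (simp add: group_act_def)
  then have "\<phi> (inv\<^bsub>G\<^esub> g) (\<phi> g x) = \<phi> (inv\<^bsub>G\<^esub> g \<otimes>\<^bsub>G\<^esub> g) x"
    using assms by (simp add: group_act_def group.inv_closed)
  also have "\<dots> = x"
    using \<open>group G\<close> assms by (simp add: group_act_def group.l_inv)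
  finally show ?thesis .
qed

lemma group_act_orbits_cover_iff:
  assumes act: "group_act G X \<phi>" and K: "K \<subseteq> topspace X"
  shows "(\<Union>g\<in>carrier G. \<phi> g ` K) = topspace X \<longleftrightarrow> (\<forall>x\<in>topspace X. \<exists>g\<in>carrier G. \<phi> g x \<in> K)"
proof -
  have inv: "inv\<^bsub>G\<^esub> g \<in> carrier G" if "g \<in> carrier G" for g
    using act that by (simp add: group_act_def)
  show ?thesis
  proof
    assume orbits: "(\<Union>g\<in>carrier G. \<phi> g ` K) = topspace X"
    show "\<forall>x\<in>topspace X. \<exists>g\<in>carrier G. \<phi> g x \<in> K"
    proof
      fix x assume "x \<in> topspace X"
      then obtain g k where g: "g \<in> carrier G" and "k \<in> K" "x = \<phi> g k"
        using orbits by blast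
      then have "\<phi> (inv\<^bsub>G\<^esub> g) x \<in> K"
        using group_act_inv_cancel[OF act g] K by auto
      then show "\<exists>g\<in>carrier G. \<phi> g x \<in> K"
        using inv[OF g] by blast
    qed
  next
    assume meets: "\<forall>x\<in>topspace X. \<exists>g\<in>carrier G. \<phi> g x \<in> K"
    show "(\<Union>g\<in>carrier G. \<phi> g ` K) = topspace X"
    proof
      show "(\<Union>g\<in>carrier G. \<phi> g ` K) \<subseteq> topspace X"
        using group_act_closed[OF act] K by blast
      show "topspace X \<subseteq> (\<Union>g\<in>carrier G. \<phi> g ` K)"
      proof
        fix x assume x: "x \<in> topspace X"
        then obtain g where g: "g \<in> carrier G" and "\<phi> g x \<in> K"
          using meets by blast
        then have "x \<in> \<phi> (inv\<^bsub>G\<^esub> g) ` K"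
          using group_act_inv_cancel[OF act g x] by (metis image_eqI)
        then show "x \<in> (\<Union>g\<in>carrier G. \<phi> g ` K)"
          using inv[OF g] by blast
      qed
    qed
  qed
qed

section \<open>The one-point compactification\<close>

lemma refines_image_iff: "refines (f ` A) \<V> \<longleftrightarrow> refines A ((\<lambda>V. f -` V) ` \<V>)"
  by (simp add: refines_def image_subset_iff_subset_vimage)

lemma alexandroff_eq_Alexandroff_compactification:
  "alexandroff X = Alexandroff_compactification X"
  unfolding alexandroff_def Alexandroff_compactification_def
proof (rule arg_cong[where f = topology], rule ext)
  fix U :: "'a option set"
  show "((None \<notin> U \<and> U \<subseteq> Some ` topspace X \<and> openin X (Some -` U)) \<or>
     (None \<in> U \<and> U \<subseteq> insert None (Some ` topspace X) \<and>
        compactin X (topspace X - Some -` U) \<and> closedin X (topspace X - Some -` U))) =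
     Alexandroff_open X U"
    (is "?open_in_alexandroff \<longleftrightarrow> _")
  proof
    assume U: ?open_in_alexandroff
    show "Alexandroff_open X U"
    proof (cases "None \<in> U")
      case False
      then have "U = Some ` (Some -` U)"
        by (metis not_None_eq subsetI subset_antisym image_vimage_subset vimageI2 rev_image_eqI)
      then show ?thesis
        using U False Alexandroff_open.base by metis
    next
      case True
      then have "U = insert None (Some ` (topspace X - (topspace X - Some -` U)))"
        using U by auto
      then show ?thesis
        using U True Alexandroff_open.ext by metis
    qed
  next
    assume "Alexandroff_open X U"
    then show ?open_in_alexandroff
    proof cases
      case (base V)
      then show ?thesis
        using openin_subset[of X V] by (auto simp: inj_vimage_image_eq)
    next
      case (ext C)
      moreover have "topspace X - Some -` U = C"
        using ext compactin_subset_topspace by auto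
      ultimately show ?thesis by auto
    qed
  qed
qed

lemma finite_open_cover_vimage_Some:
  assumes "finite_open_cover (Alexandroff_compactification X) \<V>"
  shows "finite_open_cover X ((\<lambda>V. Some -` V) ` \<V>)"
  unfolding finite_open_cover_def
proof (intro conjI ballI)
  show "finite ((\<lambda>V. Some -` V) ` \<V>)"
    using assms by (simp add: finite_open_cover_def)
  have "\<Union>\<V> = insert None (Some ` topspace X)"
    using assms by (simp add: finite_open_cover_def)
  then show "\<Union>((\<lambda>V. Some -` V) ` \<V>) = topspace X"
    by (auto simp flip: vimage_Union)
next
  fix U assume "U \<in> (\<lambda>V. Some -` V) ` \<V>"
  then obtain V where V: "V \<in> \<V>" "U = Some -` V"
    by blast
  then have open_V: "openin (Alexandroff_compactification X) V"
    using assms by (simp add: finite_open_cover_def)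
  moreover have "U = {x \<in> topspace X. Some x \<in> V}"
    using V openin_subset[OF open_V] by auto
  ultimately show "openin X U"
    using continuous_map_Some[of X] by (simp add: continuous_map_def)
qed

lemma expansive_cover_ext_action_iff:
  "expansive_cover G (insert None (Some ` S)) (ext_action \<phi>) \<V> \<longleftrightarrow>
     expansive_cover G S \<phi> ((\<lambda>V. Some -` V) ` \<V>) \<and>
     (\<forall>x\<in>S. \<exists>g\<in>carrier G. \<not> refines {Some (\<phi> g x), None} \<V>)"
proof -
  have pair_Some: "refines {ext_action \<phi> g (Some x), ext_action \<phi> g (Some y)} \<V> \<longleftrightarrow>
      refines {\<phi> g x, \<phi> g y} ((\<lambda>V. Some -` V) ` \<V>)" for g x y
    using refines_image_iff[of Some "{\<phi> g x, \<phi> g y}"] by (simp add: ext_action_def)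
  have pair_None: "refines {ext_action \<phi> g (Some x), ext_action \<phi> g None} \<V> \<longleftrightarrow>
      refines {Some (\<phi> g x), None} \<V>"
    "refines {ext_action \<phi> g None, ext_action \<phi> g (Some x)} \<V> \<longleftrightarrow>
      refines {Some (\<phi> g x), None} \<V>" for g x
    by (simp_all add: ext_action_def insert_commute)
  show ?thesis
    unfolding expansive_cover_def by (auto simp: pair_Some pair_None)
qed

lemma expansively_extendible_imp_cocompactly_expansive:
  assumes act: "group_act G X \<phi>" and "expansively_extendible G X \<phi>"
  shows "cocompactly_expansive G X \<phi>"
proof -
  obtain \<V> where cover: "finite_open_cover (Alexandroff_compactification X) \<V>"
    and exp: "expansive_cover G (topspace X) \<phi> ((\<lambda>V. Some -` V) ` \<V>)"
    and escape: "\<forall>x\<in>topspace X. \<exists>g\<in>carrier G. \<not> refines {Some (\<phi> g x), None} \<V>"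
    using assms(2)
    unfolding expansively_extendible_def expansive_by_coverings_iff
      alexandroff_eq_Alexandroff_compactification topspace_Alexandroff_compactification
      expansive_cover_ext_action_iff
    by blast
  have "None \<in> \<Union>\<V>"
    using cover by (simp add: finite_open_cover_def)
  then obtain U0 where U0: "U0 \<in> \<V>" "None \<in> U0"
    by blast
  then have "openin (Alexandroff_compactification X) U0"
    using cover by (simp add: finite_open_cover_def)
  then obtain K where K: "compactin X K" "U0 = insert None (Some ` (topspace X - K))"
    using U0(2) unfolding openin_Alexandroff_compactification by blast
  have "Some -` U0 = topspace X - K"
    using K(2) by auto
  then have "(\<lambda>V. Some -` V) ` \<V> \<union> {topspace X - K} = (\<lambda>V. Some -` V) ` \<V>"
    using U0(1) by blast
  moreover have "(\<Union>g\<in>carrier G. \<phi> g ` K) = topspace X"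
    unfolding group_act_orbits_cover_iff[OF act compactin_subset_topspace[OF K(1)]]
  proof
    fix x assume x: "x \<in> topspace X"
    then obtain g where g: "g \<in> carrier G" "\<not> refines {Some (\<phi> g x), None} \<V>"
      using escape by blast
    then have "Some (\<phi> g x) \<notin> U0"
      using U0 unfolding refines_def by blast
    then show "\<exists>g\<in>carrier G. \<phi> g x \<in> K"
      using g(1) K(2) group_act_closed[OF act g(1) x] by blast
  qed
  ultimately show ?thesis
    unfolding cocompactly_expansive_iff
    using finite_open_cover_vimage_Some[OF cover] K(1) exp by metis
qed

lemma finite_open_cover_Alexandroff_compactification:
  assumes "finite_open_cover X \<U>" "compactin X K" "closedin X K"
  shows "finite_open_cover (Alexandroff_compactification X)
           (insert (insert None (Some ` (topspace X - K))) ((\<lambda>U. Some ` U) ` \<U>))"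
  unfolding finite_open_cover_def
proof (intro conjI ballI)
  show "finite (insert (insert None (Some ` (topspace X - K))) ((\<lambda>U. Some ` U) ` \<U>))"
    using assms(1) by (simp add: finite_open_cover_def)
  have "\<Union>\<U> = topspace X"
    using assms(1) by (simp add: finite_open_cover_def)
  then show "\<Union>(insert (insert None (Some ` (topspace X - K))) ((\<lambda>U. Some ` U) ` \<U>)) =
      topspace (Alexandroff_compactification X)"
    by auto
next
  fix V assume "V \<in> insert (insert None (Some ` (topspace X - K))) ((\<lambda>U. Some ` U) ` \<U>)"
  then consider "V = insert None (Some ` (topspace X - K))" | U where "U \<in> \<U>" "V = Some ` U"
    by blast
  then show "openin (Alexandroff_compactification X) V"
  proof cases
    case 1
    then show ?thesis
      using assms(2,3) unfolding openin_Alexandroff_compactification by blast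
  next
    case 2
    then show ?thesis
      using assms(1) unfolding finite_open_cover_def openin_Alexandroff_compactification by blast
  qed
qed

lemma cocompactly_expansive_imp_expansively_extendible:
  assumes act: "group_act G X \<phi>" and "Hausdorff_space X" and "cocompactly_expansive G X \<phi>"
  shows "expansively_extendible G X \<phi>"
proof -
  obtain \<U> K where cover: "finite_open_cover X \<U>" and K: "compactin X K"
    and orbits: "(\<Union>g\<in>carrier G. \<phi> g ` K) = topspace X"
    and exp: "expansive_cover G (topspace X) \<phi> (\<U> \<union> {topspace X - K})"
    using assms(3) unfolding cocompactly_expansive_iff by blast
  define U0 where "U0 = insert None (Some ` (topspace X - K))"
  define \<V> where "\<V> = insert U0 ((\<lambda>U. Some ` U) ` \<U>)"
  have "finite_open_cover (Alexandroff_compactification X) \<V>"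
    unfolding \<V>_def U0_def using cover K compactin_imp_closedin[OF assms(2) K]
    by (rule finite_open_cover_Alexandroff_compactification)
  moreover have "(\<lambda>V. Some -` V) ` \<V> = \<U> \<union> {topspace X - K}"
  proof -
    have "Some -` U0 = topspace X - K"
      by (auto simp: U0_def)
    then show ?thesis
      by (simp add: \<V>_def image_image inj_vimage_image_eq)
  qed
  moreover have "\<forall>x\<in>topspace X. \<exists>g\<in>carrier G. \<not> refines {Some (\<phi> g x), None} \<V>"
  proof
    fix x assume "x \<in> topspace X"
    then obtain g where "g \<in> carrier G" "\<phi> g x \<in> K"
      using orbits group_act_orbits_cover_iff[OF act compactin_subset_topspace[OF K]] by blast
    moreover have "V = U0" if "V \<in> \<V>" "None \<in> V" for V
      using that by (auto simp: \<V>_def)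
    ultimately show "\<exists>g\<in>carrier G. \<not> refines {Some (\<phi> g x), None} \<V>"
      unfolding refines_def U0_def by blast
  qed
  ultimately show ?thesis
    using exp
    unfolding expansively_extendible_def expansive_by_coverings_iff
      alexandroff_eq_Alexandroff_compactification topspace_Alexandroff_compactification
      expansive_cover_ext_action_iff
    by metis
qed

section \<open>Metric spaces\<close>

(* With h x read as the distance from x to the point at infinity: the shorter of the direct route
   and the detour through infinity. *)
definition dist_via_infinity :: "('a \<Rightarrow> 'a \<Rightarrow> real) \<Rightarrow> ('a \<Rightarrow> real) \<Rightarrow> 'a \<Rightarrow> 'a \<Rightarrow> real" where
  "dist_via_infinity d h x y = min (d x y) (h x + h y)"

context Metric_space
begin

lemma lebesgue_number_refines:
  assumes "compactin mtopology K" "\<And>U. U \<in> \<U> \<Longrightarrow> openin mtopology U" "K \<subseteq> \<Union>\<U>"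
  obtains \<delta> where "\<delta> > 0"
    "\<And>a b. a \<in> M \<Longrightarrow> b \<in> M \<Longrightarrow> d a b < \<delta> \<Longrightarrow> refines {a, b} (\<U> \<union> {M - K})"
proof -
  obtain \<delta> where "\<delta> > 0" and lebesgue: "\<And>x. x \<in> K \<Longrightarrow> \<exists>U\<in>\<U>. mball x \<delta> \<subseteq> U"
    using lebesgue_number[OF assms(1,3,2)] by blast
  have "refines {a, b} (\<U> \<union> {M - K})" if ab: "a \<in> M" "b \<in> M" "d a b < \<delta>" for a b
  proof -
    have "d b a < \<delta>"
      using ab(3) commute[of a b] by simp
    then have near: "{a, b} \<subseteq> mball a \<delta>" "{a, b} \<subseteq> mball b \<delta>"
      using ab \<open>\<delta> > 0\<close> by simp_all
    consider "a \<in> K" | "b \<in> K" | "{a, b} \<subseteq> M - K"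
      using ab(1,2) by blast
    then show ?thesis
    proof cases
      case 1
      then show ?thesis
        using lebesgue[of a] near(1) unfolding refines_def by blast
    next
      case 2
      then show ?thesis
        using lebesgue[of b] near(2) unfolding refines_def by blast
    qed (auto simp: refines_def)
  qed
  with \<open>\<delta> > 0\<close> that show ?thesis by blast
qed

lemma openin_sublevel_Lipschitz:
  assumes "\<And>x y. x \<in> M \<Longrightarrow> y \<in> M \<Longrightarrow> f x \<le> f y + d x y"
  shows "openin mtopology {x \<in> M. f x < a}"
  unfolding openin_mtopology
proof (intro conjI allI impI)
  fix x assume x: "x \<in> {x \<in> M. f x < a}"
  have "mball x (a - f x) \<subseteq> {x \<in> M. f x < a}"
  proof
    fix y assume "y \<in> mball x (a - f x)"
    then have "y \<in> M" "d y x < a - f x"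
      using commute[of x y] by auto
    then show "y \<in> {x \<in> M. f x < a}"
      using assms[of y x] x by auto
  qed
  moreover have "a - f x > 0"
    using x by simp
  ultimately show "\<exists>r>0. mball x r \<subseteq> {x \<in> M. f x < a}"
    by blast
qed auto

lemma closedin_superlevel_Lipschitz:
  assumes "\<And>x y. x \<in> M \<Longrightarrow> y \<in> M \<Longrightarrow> f x \<le> f y + d x y"
  shows "closedin mtopology {x \<in> M. a \<le> f x}"
proof -
  have "M - {x \<in> M. a \<le> f x} = {x \<in> M. f x < a}"
    by auto
  then show ?thesis
    using openin_sublevel_Lipschitz[OF assms] by (simp add: closedin_def)
qed

lemma locally_compact_space_compact_mcball:
  assumes "locally_compact_space mtopology" "x \<in> M" "\<epsilon> > 0"
  obtains r where "0 < r" "r \<le> \<epsilon>" "compactin mtopology (mcball x r)"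
proof -
  obtain U C where "openin mtopology U" "compactin mtopology C" "x \<in> U" "U \<subseteq> C"
    using assms(1,2) unfolding locally_compact_space_def by auto
  then obtain r where "r > 0" "mball x r \<subseteq> C"
    unfolding openin_mtopology by blast
  define s where "s = min \<epsilon> (r/2)"
  have "0 < s" "s \<le> \<epsilon>" "mcball x s \<subseteq> C"
    using \<open>r > 0\<close> \<open>\<epsilon> > 0\<close> \<open>mball x r \<subseteq> C\<close> mcball_subset_mball_concentric[of s r x]
    by (auto simp: s_def)
  then show ?thesis
    using that closed_compactin[OF \<open>compactin mtopology C\<close>] closedin_mcball by blast
qed

lemma compactin_finite_mball_cover:
  assumes "compactin mtopology K" "\<And>x. x \<in> K \<Longrightarrow> 0 < R x"
  obtains F where "finite F" "F \<subseteq> K" "K \<subseteq> (\<Union>x\<in>F. mball x (R x))"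
proof -
  have "x \<in> mball x (R x)" if "x \<in> K" for x
    using assms(2)[OF that] compactin_subset_topspace[OF assms(1)] that by auto
  then have "K \<subseteq> \<Union>((\<lambda>x. mball x (R x)) ` K)"
    by blast
  then obtain \<F> where "finite \<F>" "\<F> \<subseteq> (\<lambda>x. mball x (R x)) ` K" "K \<subseteq> \<Union>\<F>"
    using compactinD[OF assms(1), of "(\<lambda>x. mball x (R x)) ` K"] by blast
  then obtain F where "F \<subseteq> K" "finite F" "\<F> = (\<lambda>x. mball x (R x)) ` F"
    by (meson finite_subset_image)
  then show ?thesis
    using that \<open>K \<subseteq> \<Union>\<F>\<close> by blast
qed

lemma exists_Lipschitz_vanishing_at_infinity:
  fixes K :: "nat \<Rightarrow> 'a set"
  assumes lc: "locally_compact_space mtopology"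
    and K: "\<And>n. compactin mtopology (K n)" "(\<Union>n. K n) = M"
  obtains h where "\<And>x. 0 \<le> h x" "\<And>x. x \<in> M \<Longrightarrow> 0 < h x"
    "\<And>x y. x \<in> M \<Longrightarrow> y \<in> M \<Longrightarrow> h x \<le> h y + d x y"
    "\<And>\<epsilon>. 0 < \<epsilon> \<Longrightarrow> compactin mtopology {x \<in> M. \<epsilon> \<le> h x}"
proof -
  have "\<forall>x\<in>M. \<exists>r. 0 < r \<and> r \<le> 1 \<and> compactin mtopology (mcball x r)"
  proof
    fix x assume "x \<in> M"
    show "\<exists>r. 0 < r \<and> r \<le> 1 \<and> compactin mtopology (mcball x r)"
      by (rule locally_compact_space_compact_mcball[OF lc \<open>x \<in> M\<close> zero_less_one]) blast
  qed
  then obtain R where R: "\<forall>x\<in>M. 0 < R x \<and> R x \<le> 1 \<and> compactin mtopology (mcball x (R x))"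
    by (metis bchoice)
  have KM: "K n \<subseteq> M" for n
    using K(2) by blast
  have "\<forall>n. \<exists>F. finite F \<and> F \<subseteq> K n \<and> K n \<subseteq> (\<Union>x\<in>F. mball x (R x))"
  proof
    fix n
    have "0 < R x" if "x \<in> K n" for x
      using R KM that by blast
    then obtain F where "finite F" "F \<subseteq> K n" "K n \<subseteq> (\<Union>x\<in>F. mball x (R x))"
      using compactin_finite_mball_cover[OF K(1)] by metis
    then show "\<exists>F. finite F \<and> F \<subseteq> K n \<and> K n \<subseteq> (\<Union>x\<in>F. mball x (R x))"
      by blast
  qed
  then obtain F where "\<forall>n. finite (F n) \<and> F n \<subseteq> K n \<and> K n \<subseteq> (\<Union>x\<in>F n. mball x (R x))"
    by (metis choice)
  then have F: "\<And>n. finite (F n)" "\<And>n. F n \<subseteq> K n" "\<And>n. K n \<subseteq> (\<Union>x\<in>F n. mball x (R x))"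
    by blast+
  have FM: "x \<in> M" if "x \<in> F n" for x n
    using F(2) KM that by blast
  \<comment> \<open>The weights (1/2)^n leave only finitely many balls above any level \<open>\<epsilon> > 0\<close>.\<close>
  define bump where "bump n x y = (1/2::real)^n * max 0 (R x - d x y)" for n x y
  define S where "S y = insert 0 {bump n x y | n x. x \<in> F n}" for y
  define h where "h y = Sup (S y)" for y
  have bump_le: "bump n x y \<le> (1/2)^n" if "x \<in> F n" for n x y
  proof -
    have "R x \<le> 1"
      using R FM[OF that] by blast
    then have "max 0 (R x - d x y) \<le> 1"
      using nonneg[of x y] by linarith
    then show ?thesis
      unfolding bump_def by (simp add: mult_left_le)
  qed
  have bdd: "bdd_above (S y)" for y
  proof (rule bdd_aboveI)
    fix w assume "w \<in> S y"
    then consider "w = 0" | n x where "x \<in> F n" "w = bump n x y"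
      unfolding S_def by blast
    then show "w \<le> 1"
    proof cases
      case 2
      then show ?thesis
        using bump_le[OF 2(1), of y] power_le_one[of "1/2::real" n] by linarith
    qed simp
  qed
  have bump_le_h: "bump n x y \<le> h y" if "x \<in> F n" for n x y
    unfolding h_def using that by (intro cSup_upper[OF _ bdd]) (auto simp: S_def)
  have h_nonneg: "0 \<le> h y" for y
    unfolding h_def by (intro cSup_upper[OF _ bdd]) (simp add: S_def)
  have bump_Lipschitz: "bump n x y \<le> bump n x z + d y z" if "x \<in> M" "y \<in> M" "z \<in> M" for n x y z
  proof -
    have "max 0 (R x - d x y) \<le> max 0 (R x - d x z) + d y z"
      using triangle[OF that] nonneg[of y z] by (auto simp: max_def)
    then have "bump n x y \<le> bump n x z + (1/2)^n * d y z"
      unfolding bump_def by (simp add: distrib_left[symmetric] mult_left_mono)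
    also have "(1/2::real)^n * d y z \<le> d y z"
      by (simp add: mult_left_le_one_le power_le_one)
    finally show ?thesis by simp
  qed
  have h_pos: "0 < h y" if "y \<in> M" for y
  proof -
    obtain n where "y \<in> K n"
      using K(2) \<open>y \<in> M\<close> by blast
    then obtain x where "x \<in> F n" "y \<in> mball x (R x)"
      using F(3) by blast
    then have "0 < bump n x y"
      by (simp add: bump_def)
    then show "0 < h y"
      using bump_le_h[OF \<open>x \<in> F n\<close>, of y] by linarith
  qed
  have h_Lipschitz: "h y \<le> h z + d y z" if y: "y \<in> M" and z: "z \<in> M" for y z
  proof -
    have "w \<le> h z + d y z" if w: "w \<in> S y" for w
    proof -
      consider "w = 0" | n x where "x \<in> F n" "w = bump n x y"
        using w unfolding S_def by blast
      then show ?thesis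
      proof cases
        case 1
        then show ?thesis
          using h_nonneg[of z] nonneg[of y z] by linarith
      next
        case 2
        then show ?thesis
          using bump_Lipschitz[OF FM[OF 2(1)] y z, of n] bump_le_h[OF 2(1), of z] by linarith
      qed
    qed
    then show "h y \<le> h z + d y z"
      unfolding h_def by (intro cSup_least) (auto simp: S_def)
  qed
  have h_compact: "compactin mtopology {x \<in> M. \<epsilon> \<le> h x}" if "0 < \<epsilon>" for \<epsilon>
  proof -
    obtain N where N: "(1/2::real)^N < \<epsilon>"
      using real_arch_pow_inv[of \<epsilon> "1/2"] \<open>0 < \<epsilon>\<close> by auto
    define C where "C = (\<Union>(n, x)\<in>Sigma {..<N} F. mcball x (R x))"
    have "compactin mtopology C"
      unfolding C_def using F(1) R FM
      by (intro compactin_Union) (auto simp: finite_SigmaI)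
    moreover have "{x \<in> M. \<epsilon> \<le> h x} \<subseteq> C"
    proof
      fix y assume "y \<in> {x \<in> M. \<epsilon> \<le> h x}"
      then have y: "y \<in> M" "(1/2)^N < Sup (S y)"
        using N unfolding h_def by auto
      then obtain w where w: "w \<in> S y" "(1/2)^N < w"
        using less_cSup_iff[OF _ bdd] by (auto simp: S_def)
      moreover have "(0::real) < (1/2)^N"
        by simp
      ultimately obtain n x where nx: "x \<in> F n" "w = bump n x y"
        unfolding S_def by auto
      have "(1/2::real)^N < (1/2)^n"
        using w(2) nx bump_le[OF nx(1), of y] by linarith
      then have "n < N"
        by (simp add: power_strict_decreasing_iff)
      moreover have "0 < bump n x y"
        using w(2) nx(2) \<open>(0::real) < (1/2)^N\<close> by linarith
      then have "y \<in> mcball x (R x)"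
        using y(1) FM[OF nx(1)] by (simp add: bump_def)
      ultimately show "y \<in> C"
        unfolding C_def using nx(1) by blast
    qed
    moreover have "closedin mtopology {x \<in> M. \<epsilon> \<le> h x}"
      using h_Lipschitz by (rule closedin_superlevel_Lipschitz)
    ultimately show ?thesis
      by (rule closed_compactin)
  qed
  show ?thesis
    using that h_nonneg h_pos h_Lipschitz h_compact by blast
qed

lemma Metric_space_dist_via_infinity:
  assumes "\<And>x. 0 \<le> h x" "\<And>x. x \<in> M \<Longrightarrow> 0 < h x"
    and Lipschitz: "\<And>x y. x \<in> M \<Longrightarrow> y \<in> M \<Longrightarrow> h x \<le> h y + d x y"
  shows "Metric_space M (dist_via_infinity d h)"
proof
  show "0 \<le> dist_via_infinity d h x y" for x y
    using assms(1)[of x] assms(1)[of y] by (simp add: dist_via_infinity_def)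
  show "dist_via_infinity d h x y = dist_via_infinity d h y x" for x y
    by (simp add: dist_via_infinity_def commute add.commute)
  show "dist_via_infinity d h x y = 0 \<longleftrightarrow> x = y" if "x \<in> M" "y \<in> M" for x y
    using assms(2)[OF that(1)] assms(2)[OF that(2)] zero[OF that] nonneg[of x y]
    by (auto simp: dist_via_infinity_def min_def)
  show "dist_via_infinity d h x z \<le> dist_via_infinity d h x y + dist_via_infinity d h y z"
    if "x \<in> M" "y \<in> M" "z \<in> M" for x y z
    using triangle[OF that] Lipschitz[OF that(1,2)] Lipschitz[OF that(3,2)] commute[of z y]
      assms(1)[of y]
    unfolding dist_via_infinity_def by linarith
qed

lemma mtopology_dist_via_infinity:
  assumes "\<And>x. 0 \<le> h x" "\<And>x. x \<in> M \<Longrightarrow> 0 < h x"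
    and "\<And>x y. x \<in> M \<Longrightarrow> y \<in> M \<Longrightarrow> h x \<le> h y + d x y"
  shows "Metric_space.mtopology M (dist_via_infinity d h) = mtopology"
proof -
  interpret D: Metric_space M "dist_via_infinity d h"
    using assms by (rule Metric_space_dist_via_infinity)
  have D_mball_supset: "mball x r \<subseteq> D.mball x r" for x r
    by (auto simp: dist_via_infinity_def)
  have D_mball_subset: "D.mball x r \<subseteq> mball x r" if "r \<le> h x" for x r
  proof
    fix y assume y: "y \<in> D.mball x r"
    then have "0 < h y"
      using assms(2) by simp
    with y that show "y \<in> mball x r"
      by (auto simp: dist_via_infinity_def min_def split: if_splits)
  qed
  have "(\<exists>r>0. D.mball x r \<subseteq> U) \<longleftrightarrow> (\<exists>r>0. mball x r \<subseteq> U)" if "x \<in> M" for x U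
  proof
    assume "\<exists>r>0. mball x r \<subseteq> U"
    then obtain r where "r > 0" "mball x r \<subseteq> U"
      by blast
    moreover have "D.mball x (min r (h x)) \<subseteq> mball x r"
      using D_mball_subset[of "min r (h x)" x]
        mball_subset_concentric[of "min r (h x)" r x] by simp
    moreover have "min r (h x) > 0"
      using \<open>r > 0\<close> assms(2)[OF that] by simp
    ultimately show "\<exists>r>0. D.mball x r \<subseteq> U"
      by blast
  qed (use D_mball_supset in blast)
  then show ?thesis
    unfolding topology_eq D.openin_mtopology openin_mtopology by blast
qed

end

section \<open>Metric-independent expansivity\<close>

lemma expansive_cover_imp_expansive_wrt:
  assumes act: "group_act G X \<phi>" and exp: "expansive_cover G (topspace X) \<phi> \<W>"
    and "\<delta> > 0"
    and close_refines: "\<And>a b. a \<in> topspace X \<Longrightarrow> b \<in> topspace X \<Longrightarrow> d a b < \<delta> \<Longrightarrow> refines {a, b} \<W>"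
  shows "expansive_wrt G X \<phi> d"
  unfolding expansive_wrt_def
proof (intro exI[of _ "\<delta>/2"] conjI ballI impI)
  show "\<delta>/2 > 0"
    using \<open>\<delta> > 0\<close> by simp
  fix x y assume x: "x \<in> topspace X" and y: "y \<in> topspace X" and "x \<noteq> y"
  then obtain g where g: "g \<in> carrier G" "\<not> refines {\<phi> g x, \<phi> g y} \<W>"
    using exp unfolding expansive_cover_def by blast
  moreover have "\<phi> g x \<in> topspace X" "\<phi> g y \<in> topspace X"
    using group_act_closed[OF act g(1)] x y by auto
  ultimately have "\<not> d (\<phi> g x) (\<phi> g y) < \<delta>"
    using close_refines by blast
  then show "\<exists>g\<in>carrier G. \<delta>/2 < d (\<phi> g x) (\<phi> g y)"
    using g(1) \<open>\<delta> > 0\<close> by (intro bexI[of _ g]) linarith+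
qed

lemma cocompactly_expansive_imp_MIE:
  assumes act: "group_act G X \<phi>" and "cocompactly_expansive G X \<phi>"
  shows "MIE G X \<phi>"
  unfolding MIE_def
proof (intro allI impI)
  fix d assume "compatible_metric X d"
  then interpret Metric_space "topspace X" d
    by (simp add: compatible_metric_def)
  have mtopology: "mtopology = X"
    using \<open>compatible_metric X d\<close> by (simp add: compatible_metric_def)
  obtain \<U> K where cover: "finite_open_cover X \<U>" and K: "compactin X K"
    and exp: "expansive_cover G (topspace X) \<phi> (\<U> \<union> {topspace X - K})"
    using assms(2) unfolding cocompactly_expansive_iff by blast
  obtain \<delta> where "\<delta> > 0"
    "\<And>a b. a \<in> topspace X \<Longrightarrow> b \<in> topspace X \<Longrightarrow> d a b < \<delta> \<Longrightarrow>
       refines {a, b} (\<U> \<union> {topspace X - K})"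
    by (rule lebesgue_number_refines[of K \<U>])
      (use K cover compactin_subset_topspace[OF K] in \<open>auto simp: mtopology finite_open_cover_def\<close>)
  then show "expansive_wrt G X \<phi> d"
    using expansive_cover_imp_expansive_wrt[OF act exp] by blast
qed

lemma expansive_cover_of_diameter_le:
  fixes d :: "'a \<Rightarrow> 'a \<Rightarrow> real"
  assumes "\<And>x y. x \<in> S \<Longrightarrow> y \<in> S \<Longrightarrow> x \<noteq> y \<Longrightarrow> \<exists>g\<in>carrier G. c < d (\<phi> g x) (\<phi> g y)"
    and "\<And>W a b. W \<in> \<W> \<Longrightarrow> a \<in> W \<Longrightarrow> b \<in> W \<Longrightarrow> d a b \<le> c"
  shows "expansive_cover G S \<phi> \<W>"
  unfolding expansive_cover_def refines_def
proof (intro ballI impI)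
  fix x y assume "x \<in> S" "y \<in> S" and "\<forall>g\<in>carrier G. \<exists>W\<in>\<W>. {\<phi> g x, \<phi> g y} \<subseteq> W"
  then have "\<forall>g\<in>carrier G. d (\<phi> g x) (\<phi> g y) \<le> c"
    using assms(2) by (metis insert_subset)
  then show "x = y"
    using assms(1)[OF \<open>x \<in> S\<close> \<open>y \<in> S\<close>] by (meson not_le)
qed

lemma expansive_orbits_reach_height:
  fixes d :: "'a \<Rightarrow> 'a \<Rightarrow> real"
  assumes act: "group_act G X \<phi>" and "0 < c"
    and exp_c: "\<And>x y. x \<in> topspace X \<Longrightarrow> y \<in> topspace X \<Longrightarrow> x \<noteq> y \<Longrightarrow>
                  \<exists>g\<in>carrier G. c < d (\<phi> g x) (\<phi> g y)"
    and d_le: "\<And>x y. x \<in> topspace X \<Longrightarrow> y \<in> topspace X \<Longrightarrow> d x y \<le> h x + h y"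
    and h_pos: "\<And>x. x \<in> topspace X \<Longrightarrow> 0 < h x"
  obtains r where "0 < r" "r \<le> c/2" "\<And>x. x \<in> topspace X \<Longrightarrow> \<exists>g\<in>carrier G. r \<le> h (\<phi> g x)"
proof -
  define S where "S = {x \<in> topspace X. \<forall>g\<in>carrier G. h (\<phi> g x) < c/2}"
  have S_unique: "x = y" if "x \<in> S" "y \<in> S" for x y
  proof (rule ccontr)
    assume "x \<noteq> y"
    with that obtain g where g: "g \<in> carrier G" "c < d (\<phi> g x) (\<phi> g y)"
      using exp_c unfolding S_def by blast
    moreover have "h (\<phi> g x) < c/2" "h (\<phi> g y) < c/2"
      using that g(1) unfolding S_def by blast+
    moreover have "d (\<phi> g x) (\<phi> g y) \<le> h (\<phi> g x) + h (\<phi> g y)"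
      using that g(1) group_act_closed[OF act] d_le unfolding S_def by blast
    ultimately show False
      by linarith
  qed
  have leave: "\<exists>g\<in>carrier G. c/2 \<le> h (\<phi> g x)" if "x \<in> topspace X" "x \<notin> S" for x
    using that unfolding S_def by force
  show ?thesis
  proof (cases "S = {}")
    case True
    show ?thesis
      by (rule that[of "c/2"]) (use \<open>0 < c\<close> True leave in auto)
  next
    case False
    then obtain y0 where y0: "y0 \<in> S"
      by blast
    then have "y0 \<in> topspace X"
      by (simp add: S_def)
    have "\<exists>g\<in>carrier G. min (c/2) (h y0) \<le> h (\<phi> g x)" if x: "x \<in> topspace X" for x
    proof (cases "x \<in> S")
      case True
      then have "x = y0"
        using S_unique y0 by blast
      moreover have "\<one>\<^bsub>G\<^esub> \<in> carrier G" "\<phi> \<one>\<^bsub>G\<^esub> x = x"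
        using act x by (simp_all add: group_act_def group.is_monoid monoid.one_closed)
      ultimately show ?thesis
        by (metis min.cobounded2)
    next
      case False
      then show ?thesis
        using leave[OF x] by (meson min.coboundedI1)
    qed
    moreover have "0 < min (c/2) (h y0)"
      using \<open>0 < c\<close> h_pos[OF \<open>y0 \<in> topspace X\<close>] by simp
    ultimately show ?thesis
      using that[of "min (c/2) (h y0)"] by simp
  qed
qed

lemma expansive_wrt_imp_cocompactly_expansive:
  assumes act: "group_act G X \<phi>" and cm: "compatible_metric X d" and exp: "expansive_wrt G X \<phi> d"
    and h_pos: "\<And>x. x \<in> topspace X \<Longrightarrow> 0 < h x"
    and d_le: "\<And>x y. x \<in> topspace X \<Longrightarrow> y \<in> topspace X \<Longrightarrow> d x y \<le> h x + h y"
    and Lipschitz: "\<And>x y. x \<in> topspace X \<Longrightarrow> y \<in> topspace X \<Longrightarrow> h x \<le> h y + d x y"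
    and compact: "\<And>\<epsilon>. 0 < \<epsilon> \<Longrightarrow> compactin X {x \<in> topspace X. \<epsilon> \<le> h x}"
  shows "cocompactly_expansive G X \<phi>"
proof -
  interpret Metric_space "topspace X" d
    using cm by (simp add: compatible_metric_def)
  have mtopology: "mtopology = X"
    using cm by (simp add: compatible_metric_def)
  obtain c where "0 < c" and exp_c: "\<And>x y. x \<in> topspace X \<Longrightarrow> y \<in> topspace X \<Longrightarrow> x \<noteq> y \<Longrightarrow>
      \<exists>g\<in>carrier G. c < d (\<phi> g x) (\<phi> g y)"
    using exp unfolding expansive_wrt_def by blast
  obtain r where r: "0 < r" "r \<le> c/2"
    and reach: "\<And>x. x \<in> topspace X \<Longrightarrow> \<exists>g\<in>carrier G. r \<le> h (\<phi> g x)"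
    using expansive_orbits_reach_height[OF act \<open>0 < c\<close> exp_c d_le h_pos] by blast
  define K where "K = {x \<in> topspace X. r \<le> h x}"
  define V where "V = {x \<in> topspace X. h x < r}"
  have "compactin X K"
    unfolding K_def using compact r(1) .
  moreover have "0 < c/2"
    using \<open>0 < c\<close> by simp
  ultimately obtain F where F: "finite F" "F \<subseteq> K" "K \<subseteq> (\<Union>k\<in>F. mball k (c/2))"
    using compactin_finite_mball_cover[of K "\<lambda>_. c/2"] unfolding mtopology by blast
  define \<U> where "\<U> = insert V ((\<lambda>k. mball k (c/2)) ` F)"
  have "finite_open_cover X \<U>"
    unfolding finite_open_cover_def
  proof (intro conjI ballI)
    show "finite \<U>"
      using F(1) by (simp add: \<U>_def)
    show "openin X U" if "U \<in> \<U>" for U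
      using that openin_sublevel_Lipschitz[OF Lipschitz] openin_mball
      unfolding \<U>_def V_def mtopology by blast
    have "topspace X \<subseteq> V \<union> K"
      by (auto simp: V_def K_def)
    then show "\<Union>\<U> = topspace X"
      using F(3) unfolding \<U>_def by (auto simp: V_def)
  qed
  moreover have "(\<Union>g\<in>carrier G. \<phi> g ` K) = topspace X"
  proof -
    have "\<forall>x\<in>topspace X. \<exists>g\<in>carrier G. \<phi> g x \<in> K"
      using reach group_act_closed[OF act] unfolding K_def by blast
    then show ?thesis
      using group_act_orbits_cover_iff[OF act, of K] by (auto simp: K_def)
  qed
  moreover have "expansive_cover G (topspace X) \<phi> (\<U> \<union> {topspace X - K})"
  proof (rule expansive_cover_of_diameter_le[where d = d and c = c, OF exp_c])
    fix W a b assume W: "W \<in> \<U> \<union> {topspace X - K}" and "a \<in> W" "b \<in> W"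
    then consider k where "W = mball k (c/2)" | "a \<in> V" "b \<in> V"
      unfolding \<U>_def V_def K_def by auto
    then show "d a b \<le> c"
    proof cases
      case 1
      then show ?thesis
        using \<open>a \<in> W\<close> \<open>b \<in> W\<close> triangle[of a k b] commute[of a k] by auto
    next
      case 2
      then show ?thesis
        using d_le[of a b] r(2) by (simp add: V_def)
    qed
  qed
  ultimately show ?thesis
    unfolding cocompactly_expansive_iff using \<open>compactin X K\<close> by blast
qed

lemma MIE_imp_cocompactly_expansive:
  assumes act: "group_act G X \<phi>" and "metrizable_space X" "locally_compact_space X"
    and "sigma_compact_space X" and "MIE G X \<phi>"
  shows "cocompactly_expansive G X \<phi>"
proof -
  obtain M d0 where "Metric_space M d0" and X: "X = Metric_space.mtopology M d0"
    using assms(2) unfolding metrizable_space_def by blast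
  interpret Metric_space M d0
    by fact
  have M: "topspace X = M"
    using X by simp
  obtain K :: "nat \<Rightarrow> _" where K: "\<And>n. compactin mtopology (K n)" "(\<Union>n. K n) = M"
    using assms(4) X unfolding sigma_compact_space_def by auto
  have "locally_compact_space mtopology"
    using assms(3) X by simp
  then obtain h where h_nonneg: "\<And>x. 0 \<le> h x" and h_pos: "\<And>x. x \<in> M \<Longrightarrow> 0 < h x"
    and Lipschitz: "\<And>x y. x \<in> M \<Longrightarrow> y \<in> M \<Longrightarrow> h x \<le> h y + d0 x y"
    and compact: "\<And>\<epsilon>. 0 < \<epsilon> \<Longrightarrow> compactin mtopology {x \<in> M. \<epsilon> \<le> h x}"
    by (rule exists_Lipschitz_vanishing_at_infinity[OF _ K]) blast
  have "compatible_metric X (dist_via_infinity d0 h)"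
    unfolding compatible_metric_def M
    using Metric_space_dist_via_infinity[OF h_nonneg h_pos Lipschitz]
      mtopology_dist_via_infinity[OF h_nonneg h_pos Lipschitz] X
    by simp
  moreover from this have "expansive_wrt G X \<phi> (dist_via_infinity d0 h)"
    using assms(5) unfolding MIE_def by blast
  ultimately show ?thesis
  proof (rule expansive_wrt_imp_cocompactly_expansive[OF act])
    show "0 < h x" if "x \<in> topspace X" for x
      using h_pos that M by simp
    show "dist_via_infinity d0 h x y \<le> h x + h y" for x y
      by (simp add: dist_via_infinity_def)
    show "h x \<le> h y + dist_via_infinity d0 h x y" if "x \<in> topspace X" "y \<in> topspace X" for x y
      using Lipschitz[of x y] h_nonneg[of y] that M by (simp add: dist_via_infinity_def)
    show "compactin X {x \<in> topspace X. \<epsilon> \<le> h x}" if "0 < \<epsilon>" for \<epsilon>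
      using compact[OF that] X by simp
  qed
qed

theorem mainTheorem5:
  fixes G :: "('g, 'b) monoid_scheme" and X :: "'a topology" and \<phi> :: "'g \<Rightarrow> 'a \<Rightarrow> 'a"
  assumes "metrizable_space X" and "locally_compact_space X" and "sigma_compact_space X"
    and "group_act G X \<phi>"
  shows "(MIE G X \<phi> \<longleftrightarrow> expansively_extendible G X \<phi>) \<and>
         (expansively_extendible G X \<phi> \<longleftrightarrow> cocompactly_expansive G X \<phi>)"
proof -
  have "Hausdorff_space X"
    using assms(1) by (rule metrizable_imp_Hausdorff_space)
  then show ?thesis
    using MIE_imp_cocompactly_expansive[OF assms(4,1,2,3)]
      cocompactly_expansive_imp_MIE[OF assms(4)]
      expansively_extendible_imp_cocompactly_expansive[OF assms(4)]
      cocompactly_expansive_imp_expansively_extendible[OF assms(4)]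
    by blast
qed

end
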